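(* Let $G$ be a graph on $2n$ vertices and let $\mathbf{x}$ be a perfect fractional matching of $G$. Let $b>1$ and $M:=\{e\in E(G):\mathbf{x}_e\geq\frac bn\}$. Suppose $h(\mathbf{x})\geq n\log\frac n2$. Then $\sum_{e\in M}\mathbf{x}_e\leq\frac{4n}{\log b}$.
   Context: $\log=\log_2$. A perfect fractional matching of a graph $G$ is $\mathbf{x}\colon E(G)\to\mathbb{R}_{\geq0}$ with $\sum_{w\in N(v)}\mathbf{x}_{vw}=1$ for every vertex $v$. Its entropy is $h(\mathbf{x})=\sum_{e\in E(G)}\mathbf{x}_e\log\frac1{\mathbf{x}_e}$ (with $0\log\frac10:=0$). *)

theory Defs
  imports "HOL-Analysis.Analysis"
begin

definition simple_graph :: "'a set \<Rightarrow> 'a set set \<Rightarrow> bool" where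
  "simple_graph V E \<longleftrightarrow> finite V \<and> (\<forall>e\<in>E. e \<subseteq> V \<and> card e = 2)"

definition perfect_fractional_matching :: "'a set \<Rightarrow> 'a set set \<Rightarrow> ('a set \<Rightarrow> real) \<Rightarrow> bool" where
  "perfect_fractional_matching V E x \<longleftrightarrow>
     (\<forall>e\<in>E. x e \<ge> 0) \<and> (\<forall>v\<in>V. (\<Sum>e\<in>{e\<in>E. v \<in> e}. x e) = 1)"

definition entropy :: "'a set set \<Rightarrow> ('a set \<Rightarrow> real) \<Rightarrow> real" where
  "entropy E x = (\<Sum>e\<in>E. if x e = 0 then 0 else x e * log 2 (1 / x e))"

end

theory Submission
  imports Defs "HOL-Analysis.Harmonic_Numbers"
begin

text \<open>Each term of the entropy is bounded by a linear function of the weight: the tangent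
  bound \<open>ln y \<le> y - 1\<close> at \<open>y = 1/(2Nt)\<close> gives \<open>t log (1/t) \<le> t (1 + log N) + 1/(2 N ln 2)\<close>,
  and an edge of weight at least \<open>b/N\<close> contributes even \<open>t (log N - log b)\<close>. Summing over the
  edges, the total weight is \<open>n\<close> and there are fewer than \<open>2n\<^sup>2\<close> edges, so with \<open>N = n\<close> the
  entropy is at most \<open>n log n + 3n - (1 + log b) W\<close>, where \<open>W\<close> is the weight of the heavy edges.
  Comparing with the lower bound \<open>n log n - n\<close> gives \<open>(1 + log b) W \<le> 4n\<close>.\<close>

lemma mult_log_inverse_le:
  fixes t N :: real
  assumes "t > 0" "N > 0"
  shows "t * log 2 (1 / t) \<le> t * (1 + log 2 N) + 1 / (2 * N * ln 2)"
proof -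
  have "ln (1 / (2 * N * t)) \<le> 1 / (2 * N * t) - 1"
    using assms by (intro ln_le_minus_one) simp
  then have "t * ln (1 / (2 * N * t)) \<le> 1 / (2 * N) - t"
    using assms by (auto simp: field_simps dest: mult_left_mono[of _ _ t])
  moreover have "ln (1 / t) = ln 2 + ln N + ln (1 / (2 * N * t))"
    using assms by (simp add: ln_div ln_mult)
  ultimately have "t * ln (1 / t) \<le> t * (ln 2 + ln N) + 1 / (2 * N)"
    using assms by (simp add: algebra_simps)
  then have "t * ln (1 / t) / ln 2 \<le> (t * (ln 2 + ln N) + 1 / (2 * N)) / ln 2"
    by (simp add: divide_right_mono)
  then show ?thesis
    by (simp add: log_def field_simps)
qed

lemma entropy_term_le:
  fixes t N b :: real
  assumes "t \<ge> 0" "N > 0" "b > 0"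
  shows "(if t = 0 then 0 else t * log 2 (1 / t))
    \<le> (1 + log 2 N) * t + 1 / (2 * N * ln 2) - (if t \<ge> b / N then (1 + log 2 b) * t else 0)"
proof -
  have c_nonneg: "1 / (2 * N * ln 2) \<ge> 0"
    using assms by simp
  consider "t = 0" | "t > 0" "t \<ge> b / N" | "t > 0" "t < b / N"
    using assms(1) by fastforce
  then show ?thesis
  proof cases
    case 1
    then show ?thesis
      using assms c_nonneg by simp
  next
    case 2
    then have "log 2 (1 / t) \<le> log 2 (N / b)"
      using assms by (simp add: field_simps)
    also have "\<dots> = log 2 N - log 2 b"
      using assms by (simp add: log_divide)
    finally have "t * log 2 (1 / t) \<le> t * (log 2 N - log 2 b)"
      using \<open>t > 0\<close> by (intro mult_left_mono) simp_all
    then have "t * log 2 (1 / t) \<le> (1 + log 2 N) * t - (1 + log 2 b) * t"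
      by (simp add: algebra_simps)
    with 2 c_nonneg show ?thesis
      by (simp del: zero_le_divide_1_iff)
  next
    case 3
    then show ?thesis
      using mult_log_inverse_le[of t N] assms by (simp add: algebra_simps)
  qed
qed

lemma entropy_le_minus_heavy_weight:
  fixes E :: "'a set set" and x :: "'a set \<Rightarrow> real" and N b :: real
  assumes "finite E" "\<And>e. e \<in> E \<Longrightarrow> x e \<ge> 0" "N > 0" "b > 0"
  shows "entropy E x \<le> (1 + log 2 N) * sum x E + card E / (2 * N * ln 2)
      - (1 + log 2 b) * (\<Sum>e\<in>{e\<in>E. x e \<ge> b / N}. x e)"
proof -
  have heavy: "(\<Sum>e\<in>E. if x e \<ge> b / N then (1 + log 2 b) * x e else 0)
      = (1 + log 2 b) * (\<Sum>e\<in>{e\<in>E. x e \<ge> b / N}. x e)"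
    unfolding sum_distrib_left using assms(1) by (simp add: sum.inter_filter)
  have "entropy E x \<le> (\<Sum>e\<in>E. (1 + log 2 N) * x e + 1 / (2 * N * ln 2)
      - (if x e \<ge> b / N then (1 + log 2 b) * x e else 0))"
    unfolding entropy_def using assms by (intro sum_mono entropy_term_le) auto
  then show ?thesis
    by (simp add: heavy sum.distrib sum_subtractf sum_distrib_left)
qed

lemma simple_graph_card_edges_le:
  assumes "simple_graph V E"
  shows "finite E" "card E \<le> card V choose 2"
proof -
  have "finite V" and "E \<subseteq> {e. e \<subseteq> V \<and> card e = 2}"
    using assms by (auto simp: simple_graph_def)
  moreover have "card {e. e \<subseteq> V \<and> card e = 2} = card V choose 2"
    using \<open>finite V\<close> by (simp add: n_subsets)
  ultimately show "finite E" "card E \<le> card V choose 2"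
    by (auto simp: finite_Collect_subsets intro: finite_subset dest: card_mono[rotated])
qed

lemma perfect_fractional_matching_total_weight:
  assumes "simple_graph V E" "perfect_fractional_matching V E x"
  shows "2 * sum x E = real (card V)"
proof -
  have "finite V" and edge: "\<And>e. e \<in> E \<Longrightarrow> e \<subseteq> V \<and> card e = 2"
    using assms(1) by (auto simp: simple_graph_def)
  have "real (card V) = (\<Sum>v\<in>V. \<Sum>e\<in>{e\<in>E. v \<in> e}. x e)"
    using assms(2) by (simp add: perfect_fractional_matching_def)
  also have "\<dots> = (\<Sum>e\<in>E. \<Sum>v\<in>{v\<in>V. v \<in> e}. x e)"
    using \<open>finite V\<close> simple_graph_card_edges_le(1)[OF assms(1)] by (rule sum.swap_restrict)
  also have "\<dots> = (\<Sum>e\<in>E. 2 * x e)"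
  proof (rule sum.cong)
    fix e assume "e \<in> E"
    then have "{v\<in>V. v \<in> e} = e" and "card e = 2"
      using edge by auto
    then show "(\<Sum>v\<in>{v\<in>V. v \<in> e}. x e) = 2 * x e"
      by simp
  qed simp
  finally show ?thesis
    by (simp add: sum_distrib_left)
qed

theorem lemma4p3:
  fixes V :: "'a set" and E :: "'a set set" and x :: "'a set \<Rightarrow> real"
    and n :: nat and b :: real
  assumes "simple_graph V E"
    and "card V = 2 * n"
    and "perfect_fractional_matching V E x"
    and "b > 1"
    and "entropy E x \<ge> real n * log 2 (real n / 2)"
  shows "(\<Sum>e\<in>{e\<in>E. x e \<ge> b / real n}. x e) \<le> 4 * real n / log 2 b"
proof -
  define W where "W = (\<Sum>e\<in>{e\<in>E. x e \<ge> b / real n}. x e)"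
  have "finite E" and card_E: "card E \<le> 2 * n choose 2"
    using simple_graph_card_edges_le[OF assms(1)] assms(2) by auto
  have x_nonneg: "\<And>e. e \<in> E \<Longrightarrow> x e \<ge> 0"
    using assms(3) by (simp add: perfect_fractional_matching_def)
  have total: "sum x E = real n"
    using perfect_fractional_matching_total_weight[OF assms(1,3)] assms(2) by simp
  have "W \<le> sum x E"
    unfolding W_def using \<open>finite E\<close> x_nonneg by (intro sum_mono2) auto
  moreover have "W \<ge> 0"
    unfolding W_def using x_nonneg by (intro sum_nonneg) auto
  moreover have "(1 + log 2 b) * W \<le> 4 * real n" if "n > 0"
  proof -
    have entropy_bound: "entropy E x
        \<le> (1 + log 2 (real n)) * real n + card E / (2 * real n * ln 2) - (1 + log 2 b) * W"
      using entropy_le_minus_heavy_weight[of E x "real n" b, OF \<open>finite E\<close> x_nonneg] that assms(4)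
      by (simp add: W_def total)
    have "card E \<le> 2 * n * n"
      using card_E by (simp add: choose_two) (cases n; simp add: algebra_simps)
    then have "real (card E) \<le> 2 * real n * real n"
      by (metis of_nat_le_iff of_nat_mult of_nat_numeral)
    then have "real (card E) / (2 * real n * ln 2) \<le> real n / ln 2"
      using that by (simp add: field_simps)
    also have "\<dots> \<le> 2 * real n"
      using ln2_ge_two_thirds by (simp add: field_simps mult_le_cancel_left1)
    finally show ?thesis
      using entropy_bound assms(5) that by (simp add: log_divide algebra_simps)
  qed
  ultimately have "log 2 b * W \<le> 4 * real n"
    using total by (cases "n = 0") (simp_all add: algebra_simps)
  then show ?thesis
    unfolding W_def using assms(4) by (simp add: field_simps)
qed

end
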